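(* Let $w$ be a packed word of length $n$, viewed as a map $w:[n]\to\mathbb{N}$. Define the double poset $P_w=([n],\leq_1,\leq_2)$ by $$i\leq_1 j \iff (i\geq j \text{ and } w(i)\leq w(j)),\qquad i\leq_2 j\iff (i\leq j\text{ and } w(i)\leq w(j)).$$ Then $P_w$ is a weak plane poset, and its total quasi-order $\preceq$ (given by $i\preceq j\iff (i\leq_1 j$ or $i\leq_2 j)$) is the total quasi-order associated to $w$, namely $i\preceq j \iff w(i)\leq w(j)$.
   Context: A packed word of length $n$ is a word $w(1)\cdots w(n)$ of positive integers whose set of letters is $\{1,\dots,k\}$ for some $k$ (equivalently, a surjection $[n]\to[k]$). A double poset is a finite set with two partial orders $\leq_1,\leq_2$. A weak plane poset is a double poset such that (1) $x\leq_1 y$ and $x\leq_2 y$ imply $x=y$, and (2) the relation $x\preceq y \iff (x\leq_1 y$ or $x\leq_2 y)$ is a total quasi-order (reflexive, transitive, all elements comparable, not necessarily antisymmetric). Total quasi-orders on $[n]$ are in bijection with packed words of length $n$: to a total quasi-order one associates the packed word $w$ with $w(i)\leq w(j)\iff i\preceq j$ (the $r$-th equivalence class, in increasing order, gives the positions of the letter $r$). *)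

theory Defs
  imports Main
begin

text \<open>A packed word of length n: a map w on positions {1..n} whose set of letters
  is {1..k} for some k (values outside {1..n} are irrelevant).\<close>
definition packed_word :: "nat \<Rightarrow> (nat \<Rightarrow> nat) \<Rightarrow> bool" where
  "packed_word n w \<longleftrightarrow> (\<exists>k. w ` {1..n} = {1..k})"

definition double_poset :: "'a set \<Rightarrow> 'a rel \<Rightarrow> 'a rel \<Rightarrow> bool" where
  "double_poset A r1 r2 \<longleftrightarrow> partial_order_on A r1 \<and> partial_order_on A r2"

definition union_order :: "'a rel \<Rightarrow> 'a rel \<Rightarrow> 'a rel" where
  "union_order r1 r2 = r1 \<union> r2"

definition total_quasi_order_on :: "'a set \<Rightarrow> 'a rel \<Rightarrow> bool" where
  "total_quasi_order_on A r \<longleftrightarrow> preorder_on A r \<and> (\<forall>x\<in>A. \<forall>y\<in>A. (x, y) \<in> r \<or> (y, x) \<in> r)"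

definition weak_plane_poset :: "'a set \<Rightarrow> 'a rel \<Rightarrow> 'a rel \<Rightarrow> bool" where
  "weak_plane_poset A r1 r2 \<longleftrightarrow> double_poset A r1 r2
     \<and> (\<forall>x y. (x, y) \<in> r1 \<and> (x, y) \<in> r2 \<longrightarrow> x = y)
     \<and> total_quasi_order_on A (union_order r1 r2)"

definition Pw1 :: "nat \<Rightarrow> (nat \<Rightarrow> nat) \<Rightarrow> nat rel" where
  "Pw1 n w = {(i, j). i \<in> {1..n} \<and> j \<in> {1..n} \<and> i \<ge> j \<and> w i \<le> w j}"

definition Pw2 :: "nat \<Rightarrow> (nat \<Rightarrow> nat) \<Rightarrow> nat rel" where
  "Pw2 n w = {(i, j). i \<in> {1..n} \<and> j \<in> {1..n} \<and> i \<le> j \<and> w i \<le> w j}"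

definition word_quasi_order :: "nat \<Rightarrow> (nat \<Rightarrow> nat) \<Rightarrow> nat rel" where
  "word_quasi_order n w = {(i, j). i \<in> {1..n} \<and> j \<in> {1..n} \<and> w i \<le> w j}"

end

theory Submission
  imports Defs
begin

text \<open>Both orders of \<open>P\<^sub>w\<close> compare letters by \<open>w\<close>, one refining by decreasing and the other by
  increasing position. A pair comparable in both must therefore sit at one position, and since
  any two positions are comparable one way or the other, the union of the two orders forgets
  positions and keeps only \<open>w i \<le> w j\<close>.\<close>

lemma partial_order_on_Pw1: "partial_order_on {1..n} (Pw1 n w)"
  unfolding partial_order_on_def preorder_on_def refl_on_def trans_def antisym_def Pw1_def
  by auto

lemma partial_order_on_Pw2: "partial_order_on {1..n} (Pw2 n w)"
  unfolding partial_order_on_def preorder_on_def refl_on_def trans_def antisym_def Pw2_def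
  by auto

lemma Pw1_Pw2_common_pair_eq:
  assumes "(i, j) \<in> Pw1 n w" and "(i, j) \<in> Pw2 n w"
  shows "i = j"
  using assms unfolding Pw1_def Pw2_def by simp

lemma union_order_Pw1_Pw2: "union_order (Pw1 n w) (Pw2 n w) = word_quasi_order n w"
  unfolding union_order_def Pw1_def Pw2_def word_quasi_order_def by auto

lemma total_quasi_order_on_word_quasi_order:
  "total_quasi_order_on {1..n} (word_quasi_order n w)"
  unfolding total_quasi_order_on_def preorder_on_def refl_on_def trans_def word_quasi_order_def
  by auto

lemma weak_plane_poset_Pw: "weak_plane_poset {1..n} (Pw1 n w) (Pw2 n w)"
  unfolding weak_plane_poset_def double_poset_def union_order_Pw1_Pw2
  using partial_order_on_Pw1 partial_order_on_Pw2 Pw1_Pw2_common_pair_eq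
    total_quasi_order_on_word_quasi_order
  by blast

theorem mainTheorem2:
  fixes n :: nat and w :: "nat \<Rightarrow> nat"
  assumes "packed_word n w"
  shows "weak_plane_poset {1..n} (Pw1 n w) (Pw2 n w)
    \<and> union_order (Pw1 n w) (Pw2 n w) = word_quasi_order n w"
  using weak_plane_poset_Pw union_order_Pw1_Pw2 by blast

end
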